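(* Let $\ell>0$. The functions $D_\ell$, $\Gamma_\ell$ and $\sqrt{\Gamma_\ell}$ on $\mathbb R_+$ are positive, globally Lipschitz continuous and bounded. The function $A_\ell$ is bounded above but not below; it has continuous first derivative on all of $\mathbb R_+$ and is locally Lipschitz, in particular $|A_\ell(x)-A_\ell(y)|\lesssim(1+|x|)|y-x|$ for $x,y\in\mathbb R_+$. Moreover $A_\ell(x)>0$ for $x\in[0,1)$, $A_\ell(x)<0$ for $x>1$, and $A_\ell(1)=0$.
   Context: $\mathbb R_+=[0,\infty)$; $a\lesssim b$ means $a\le Kb$ for a constant $K$ independent of $x,y$. With $\Phi$ the standard normal cdf: for $x>0$, $D_\ell(x)=2\ell^2e^{\ell^2(x-1)}\Phi\big(\tfrac{\ell(1-2x)}{\sqrt{2x}}\big)$, $\Gamma_\ell(x)=D_\ell(x)+2\ell^2\Phi\big(-\tfrac{\ell}{\sqrt{2x}}\big)$, $A_\ell(x)=-2xD_\ell(x)+\Gamma_\ell(x)$; and $D_\ell(0)=\Gamma_\ell(0)=A_\ell(0)=2\ell^2e^{-\ell^2}$. *)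

theory Defs
  imports "HOL-Probability.Probability"
begin

definition Phi :: "real \<Rightarrow> real" where
  "Phi x = (LINT t:{..x}|lborel. std_normal_density t)"

definition D_fun :: "real \<Rightarrow> real \<Rightarrow> real" where
  "D_fun l x = (if x = 0 then 2 * l\<^sup>2 * exp (- l\<^sup>2)
     else 2 * l\<^sup>2 * exp (l\<^sup>2 * (x - 1)) * Phi (l * (1 - 2 * x) / sqrt (2 * x)))"

definition Gamma_fun :: "real \<Rightarrow> real \<Rightarrow> real" where
  "Gamma_fun l x = (if x = 0 then 2 * l\<^sup>2 * exp (- l\<^sup>2)
     else D_fun l x + 2 * l\<^sup>2 * Phi (- l / sqrt (2 * x)))"

definition A_fun :: "real \<Rightarrow> real \<Rightarrow> real" where
  "A_fun l x = (if x = 0 then 2 * l\<^sup>2 * exp (- l\<^sup>2)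
     else - 2 * x * D_fun l x + Gamma_fun l x)"

end

theory Submission
  imports Defs "HOL-Real_Asymp.Real_Asymp"
begin

text \<open>
  Write \<open>\<phi>\<close> for the standard normal density, \<open>R(z) = \<Phi>(-z)/\<phi>(z)\<close> for the Mills ratio,
  \<open>g(z) = z R(z)\<close>, and for \<open>x > 0\<close> put \<open>s = \<surd>(2x)\<close>, \<open>u = \<ell>/s\<close>, \<open>w = \<ell>s - u\<close>.
  Since \<open>exp(\<ell>\<^sup>2(x - 1)) = \<phi>(u)/\<phi>(w)\<close>, one gets \<open>D(x) = 2\<ell>\<^sup>2 \<phi>(u) R(w)\<close> and
  \<open>A(x) = (2\<ell>\<^sup>2 \<phi>(u)/u) (g(u) - g(w))\<close>. The Mills ratio bounds \<open>z/(1 + z\<^sup>2) < R(z) < 1/z\<close>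
  make \<open>g\<close> strictly increasing, so \<open>A(x)\<close> has the sign of \<open>u - w\<close>, i.e. of \<open>1 - x\<close>; they also
  bound \<open>D\<close> and give \<open>A(x) \<le> 8\<ell>\<^sup>2 - \<ell>\<phi>(\<ell>)\<surd>(2x)\<close>, so \<open>A\<close> is unbounded below.
  For \<open>x > 0\<close> the derivatives are explicit: those of \<open>D\<close> and \<open>\<Gamma>\<close> are bounded, that of \<open>A\<close> is
  \<open>O(1 + x)\<close>, and all of them extend continuously to \<open>x = 0\<close>. The mean value theorem then gives
  the Lipschitz bounds, for \<open>\<surd>\<Gamma>\<close> together with \<open>\<Gamma> \<ge> 2\<ell>\<^sup>2 exp(-\<ell>\<^sup>2) \<Phi>(-\<ell>) > 0\<close>.
\<close>

abbreviation phi :: "real \<Rightarrow> real" where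
  "phi \<equiv> std_normal_density"

subsection \<open>The standard normal distribution\<close>

lemma std_normal_density_pos: "phi x > 0"
  by (simp add: std_normal_density_def)

lemma std_normal_density_minus [simp]: "phi (- x) = phi x"
  by (simp add: std_normal_density_def)

lemma std_normal_density_le_exp: "phi x \<le> exp (- (x\<^sup>2 / 2))"
  unfolding std_normal_density_def using pi_gt3 by (simp add: divide_le_eq)

lemma std_normal_density_le_1: "phi x \<le> 1"
  by (rule order_trans[OF std_normal_density_le_exp]) simp

lemma std_normal_density_antimono: "0 \<le> a \<Longrightarrow> a \<le> b \<Longrightarrow> phi b \<le> phi a"
  unfolding std_normal_density_def by (intro mult_left_mono) (auto intro: power_mono)

lemma std_normal_density_divide_le: "\<bar>w\<bar> \<le> 1 \<Longrightarrow> phi u / phi w \<le> 3"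
proof -
  assume "\<bar>w\<bar> \<le> 1"
  then have "w\<^sup>2 / 2 - u\<^sup>2 / 2 \<le> 1"
    using abs_square_le_1[of w] zero_le_power2[of u] by linarith
  then have "exp (w\<^sup>2 / 2 - u\<^sup>2 / 2) \<le> exp 1" by simp
  also have "exp 1 \<le> (3::real)" using exp_le by simp
  finally show ?thesis
    unfolding std_normal_density_def by (simp add: exp_diff[symmetric])
qed

lemma has_real_derivative_std_normal_density [derivative_intros]:
  "(g has_real_derivative g') (at x within S) \<Longrightarrow>
   ((\<lambda>x. phi (g x)) has_real_derivative (- g x * phi (g x)) * g') (at x within S)"
  unfolding std_normal_density_def
  by (auto intro!: derivative_eq_intros simp: field_simps power2_eq_square)

lemma mult_std_normal_density_le_1: "t \<ge> 0 \<Longrightarrow> t * phi t \<le> 1"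
proof -
  assume t: "t \<ge> 0"
  have "t \<le> 1 + t\<^sup>2 / 2"
    using zero_le_power2[of "t - 1"] by (simp add: power2_diff)
  also have "\<dots> \<le> exp (t\<^sup>2 / 2)" by (rule exp_ge_add_one_self)
  finally have "t * phi t \<le> exp (t\<^sup>2 / 2) * exp (- (t\<^sup>2 / 2))"
    using t std_normal_density_le_exp[of t] std_normal_density_pos[of t] by (intro mult_mono) auto
  then show ?thesis by (simp add: exp_minus)
qed

lemma power3_mult_std_normal_density_le_8: "t \<ge> 0 \<Longrightarrow> t ^ 3 * phi t \<le> 8"
proof -
  assume t: "t \<ge> 0"
  have "t ^ 3 \<le> 8 * exp (t\<^sup>2 / 2)"
  proof (cases "t \<le> 1")
    case True
    then have "t ^ 3 \<le> 1" using t by (simp add: power_le_one)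
    also have "1 \<le> exp (t\<^sup>2 / 2)" by simp
    finally show ?thesis using exp_gt_zero[of "t\<^sup>2 / 2"] by linarith
  next
    case False
    then have "t ^ 3 \<le> t ^ 4" using t by (simp add: power_increasing)
    also have "t ^ 4 = 8 * ((t\<^sup>2 / 2)\<^sup>2 / 2)" by (simp add: power2_eq_square eval_nat_numeral)
    also have "\<dots> \<le> 8 * exp (t\<^sup>2 / 2)"
      using exp_lower_Taylor_quadratic[of "t\<^sup>2 / 2"] zero_le_power2[of t] by linarith
    finally show ?thesis .
  qed
  then have "t ^ 3 * phi t \<le> (8 * exp (t\<^sup>2 / 2)) * exp (- (t\<^sup>2 / 2))"
    using t std_normal_density_le_exp[of t] std_normal_density_pos[of t] by (intro mult_mono) auto
  then show ?thesis by (simp add: exp_minus mult.assoc)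
qed

lemma set_integrable_std_normal_density: "A \<in> sets borel \<Longrightarrow> set_integrable lborel A phi"
  using integrable_std_normal_moment[of 0] unfolding set_integrable_def
  by (intro integrable_mult_indicator) auto

lemma Phi_eq_measure: "Phi x = measure (density lborel phi) {..x}"
proof -
  have "emeasure (density lborel phi) {..x} = (\<integral>\<^sup>+ t. ennreal (phi t) * indicator {..x} t \<partial>lborel)"
    by (subst emeasure_density) auto
  also have "\<dots> = (\<integral>\<^sup>+ t. ennreal (indicator {..x} t *\<^sub>R phi t) \<partial>lborel)"
    by (intro nn_integral_cong) (auto simp: indicator_def)
  also have "\<dots> = ennreal (Phi x)"
    unfolding Phi_def set_lebesgue_integral_def
    using set_integrable_std_normal_density[of "{..x}"] std_normal_density_pos
    by (intro nn_integral_eq_integral) (auto simp: set_integrable_def indicator_def less_imp_le)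
  finally show ?thesis unfolding measure_def
    by (simp add: Phi_def set_lebesgue_integral_def less_imp_le[OF std_normal_density_pos])
qed

interpretation std_normal: real_distribution "density lborel phi"
  by (intro real_distribution.intro prob_space_normal_density real_distribution_axioms.intro) simp_all

lemma Phi_eq_cdf: "Phi = cdf (density lborel phi)"
  by (auto simp: fun_eq_iff Phi_eq_measure cdf_def)

lemma Phi_at_bot: "(Phi \<longlongrightarrow> 0) at_bot"
  unfolding Phi_eq_cdf by (rule std_normal.cdf_lim_at_bot)

lemma Phi_at_top: "(Phi \<longlongrightarrow> 1) at_top"
  unfolding Phi_eq_cdf by (rule std_normal.cdf_lim_at_top_prob)

lemma Phi_eq_integral: "Phi x = integral {..x} phi"
  unfolding Phi_def
  by (rule set_borel_integral_eq_integral(2)[OF set_integrable_std_normal_density]) simp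

lemma Phi_eq_add_integral: "a \<le> y \<Longrightarrow> Phi y = Phi a + integral {a..y} phi"
proof -
  assume "a \<le> y"
  have "(phi has_integral (Phi a + integral {a..y} phi)) ({..a} \<union> {a..y})"
    using set_borel_integral_eq_integral(1)[OF set_integrable_std_normal_density]
    by (intro has_integral_Un) (auto simp: Phi_eq_integral intro!: integrable_integral
        intro: negligible_subset[of "{a}"])
  moreover have "{..a} \<union> {a..y} = {..y}" using \<open>a \<le> y\<close> by auto
  ultimately show ?thesis unfolding Phi_eq_integral by (simp add: integral_unique)
qed

lemma Phi_has_real_derivative: "(Phi has_real_derivative phi x) (at x)"
proof -
  have "continuous_on {x - 1..x + 1} phi"
    unfolding std_normal_density_def by (intro continuous_intros) auto
  then have "((\<lambda>y. integral {x - 1..y} phi) has_real_derivative phi x) (at x within {x - 1..x + 1})"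
    by (rule integral_has_real_derivative) auto
  then have "((\<lambda>y. Phi (x - 1) + integral {x - 1..y} phi) has_real_derivative phi x)
              (at x within {x - 1..x + 1})"
    using DERIV_add[OF DERIV_const] by fastforce
  then have "((\<lambda>y. Phi (x - 1) + integral {x - 1..y} phi) has_real_derivative phi x) (at x)"
    by (simp add: at_within_Icc_at)
  then show ?thesis
    by (rule has_field_derivative_transform_within_open[where S = "{x - 1<..<x + 1}"])
       (auto simp: Phi_eq_add_integral[symmetric])
qed

lemma has_real_derivative_Phi [derivative_intros]:
  "(g has_real_derivative g') (at x within S) \<Longrightarrow>
   ((\<lambda>x. Phi (g x)) has_real_derivative phi (g x) * g') (at x within S)"
  using DERIV_chain2[OF Phi_has_real_derivative] by blast

lemma Phi_strict_mono: "x < y \<Longrightarrow> Phi x < Phi y"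
  by (rule DERIV_pos_imp_increasing[of x y Phi])
     (use Phi_has_real_derivative std_normal_density_pos in auto)

lemma Phi_mono: "x \<le> y \<Longrightarrow> Phi x \<le> Phi y"
  using Phi_strict_mono by (cases "x = y") (auto intro: less_imp_le)

lemma Phi_pos: "Phi x > 0"
proof -
  have "0 \<le> Phi (x - 1)"
  proof (rule tendsto_upperbound[OF Phi_at_bot])
    show "\<forall>\<^sub>F z in at_bot. Phi z \<le> Phi (x - 1)"
      unfolding eventually_at_bot_linorder by (auto intro!: exI[of _ "x - 1"] Phi_mono)
  qed simp
  also have "\<dots> < Phi x" by (rule Phi_strict_mono) simp
  finally show ?thesis .
qed

lemma Phi_less_1: "Phi x < 1"
proof -
  have "Phi x < Phi (x + 1)" by (rule Phi_strict_mono) simp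
  also have "\<dots> \<le> 1"
  proof (rule tendsto_lowerbound[OF Phi_at_top])
    show "\<forall>\<^sub>F z in at_top. Phi (x + 1) \<le> Phi z"
      unfolding eventually_at_top_linorder by (auto intro!: exI[of _ "x + 1"] Phi_mono)
  qed simp
  finally show ?thesis .
qed

subsection \<open>The Mills ratio\<close>

lemma pos_if_DERIV_neg_tendsto_0:
  fixes g g' :: "real \<Rightarrow> real"
  assumes "\<And>t. t \<ge> z \<Longrightarrow> (g has_real_derivative g' t) (at t)"
    and "\<And>t. t \<ge> z \<Longrightarrow> g' t < 0" and "(g \<longlongrightarrow> 0) at_top"
  shows "g z > 0"
proof -
  have decreasing: "g b < g a" if "z \<le> a" "a < b" for a b
    using DERIV_neg_imp_decreasing[of a b g] assms(1,2) that by (meson order_trans)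
  have "0 \<le> g (z + 1)"
  proof (rule tendsto_upperbound[OF assms(3)])
    show "\<forall>\<^sub>F t in at_top. g t \<le> g (z + 1)"
      unfolding eventually_at_top_linorder
      by (rule exI[of _ "z + 1"]) (auto intro: less_imp_le decreasing simp: order.order_iff_strict)
  qed simp
  also have "\<dots> < g z" by (rule decreasing) auto
  finally show ?thesis .
qed

lemma Phi_minus_at_top: "((\<lambda>z. Phi (- z)) \<longlongrightarrow> 0) at_top"
  by (rule filterlim_compose[OF Phi_at_bot]) real_asymp

lemma Phi_minus_less: "z > 0 \<Longrightarrow> Phi (- z) < phi z / z"
proof -
  assume z: "z > 0"
  have "phi z / z - Phi (- z) > 0"
  proof (rule pos_if_DERIV_neg_tendsto_0[where g = "\<lambda>t. phi t / t - Phi (- t)"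
        and g' = "\<lambda>t. - phi t / t\<^sup>2"])
    fix t assume "z \<le> t"
    then have t: "t > 0" using z by simp
    show "((\<lambda>t. phi t / t - Phi (- t)) has_real_derivative - phi t / t\<^sup>2) (at t)"
      using t by (auto intro!: derivative_eq_intros simp: field_simps power2_eq_square)
    show "- phi t / t\<^sup>2 < 0" using t std_normal_density_pos[of t] by simp
  next
    have "((\<lambda>t. phi t / t) \<longlongrightarrow> 0) at_top"
      unfolding std_normal_density_def by real_asymp
    from tendsto_diff[OF this Phi_minus_at_top]
    show "((\<lambda>t. phi t / t - Phi (- t)) \<longlongrightarrow> 0) at_top" by simp
  qed
  then show ?thesis by simp
qed

lemma Phi_minus_greater: "z > 0 \<Longrightarrow> z * phi z / (1 + z\<^sup>2) < Phi (- z)"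
proof -
  assume z: "z > 0"
  have "Phi (- z) - z * phi z / (1 + z\<^sup>2) > 0"
  proof (rule pos_if_DERIV_neg_tendsto_0[where g = "\<lambda>t. Phi (- t) - t * phi t / (1 + t\<^sup>2)"
        and g' = "\<lambda>t. - 2 * phi t / ((1 + t\<^sup>2) * (1 + t\<^sup>2))"])
    fix t :: real
    have ne: "1 + t\<^sup>2 \<noteq> 0" "1 + (t ^ 4 + 2 * t\<^sup>2) \<noteq> 0"
      by (smt (verit) zero_le_power2 zero_le_power_eq_numeral even_numeral)+
    show "((\<lambda>t. Phi (- t) - t * phi t / (1 + t\<^sup>2)) has_real_derivative
            - 2 * phi t / ((1 + t\<^sup>2) * (1 + t\<^sup>2))) (at t)"
      using ne by (auto intro!: derivative_eq_intros simp: field_simps)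
                  (simp add: algebra_simps eval_nat_numeral)
    show "- 2 * phi t / ((1 + t\<^sup>2) * (1 + t\<^sup>2)) < 0"
      using std_normal_density_pos[of t] by (simp add: add_pos_nonneg)
  next
    have "((\<lambda>t. t * phi t / (1 + t\<^sup>2)) \<longlongrightarrow> 0) at_top"
      unfolding std_normal_density_def by real_asymp
    from tendsto_diff[OF Phi_minus_at_top this]
    show "((\<lambda>t. Phi (- t) - t * phi t / (1 + t\<^sup>2)) \<longlongrightarrow> 0) at_top" by simp
  qed
  then show ?thesis by simp
qed

definition mills_ratio :: "real \<Rightarrow> real" where
  "mills_ratio z = Phi (- z) / phi z"

lemma mills_ratio_pos: "mills_ratio z > 0"
  unfolding mills_ratio_def using Phi_pos std_normal_density_pos by simp

lemma mult_mills_ratio_has_real_derivative: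
  "((\<lambda>z. z * mills_ratio z) has_real_derivative (1 + z\<^sup>2) * mills_ratio z - z) (at z)"
  using std_normal_density_pos[of z] unfolding mills_ratio_def
  by (auto intro!: derivative_eq_intros simp: field_simps power2_eq_square)

lemma mult_mills_ratio_deriv_pos: "z \<ge> 0 \<Longrightarrow> (1 + z\<^sup>2) * mills_ratio z - z > 0"
proof (cases "z = 0")
  case True
  then show ?thesis using mills_ratio_pos[of 0] by simp
next
  case False
  assume "z \<ge> 0"
  with False have "z * phi z < Phi (- z) * (1 + z\<^sup>2)"
    using Phi_minus_greater[of z] by (simp add: add_pos_nonneg pos_divide_less_eq)
  then show ?thesis
    using std_normal_density_pos[of z] unfolding mills_ratio_def by (simp add: field_simps)
qed

lemma mult_mills_ratio_less:
  assumes "0 < u" "w < u"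
  shows "w * mills_ratio w < u * mills_ratio u"
proof (cases "w \<le> 0")
  case True
  then have "w * mills_ratio w \<le> 0"
    using mills_ratio_pos[of w] by (simp add: mult_nonpos_nonneg)
  also have "0 < u * mills_ratio u"
    using assms(1) mills_ratio_pos[of u] by simp
  finally show ?thesis .
next
  case False
  show ?thesis
    by (rule DERIV_pos_imp_increasing[of w u])
       (use False assms(2) mult_mills_ratio_has_real_derivative mult_mills_ratio_deriv_pos
         in \<open>auto intro!: exI\<close>)
qed

lemma continuous_on_Ici_if_tendsto_at_right:
  fixes f :: "real \<Rightarrow> real"
  assumes "\<And>x. x > a \<Longrightarrow> isCont f x" "(f \<longlongrightarrow> f a) (at_right a)"
  shows "continuous_on {a..} f"
proof (clarsimp simp: continuous_on_eq_continuous_within)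
  fix x assume "a \<le> x"
  show "continuous (at x within {a..}) f"
  proof (cases "x = a")
    case True
    then show ?thesis using assms(2) by (simp add: continuous_within at_within_Ici_at_right)
  next
    case False
    then show ?thesis
      using assms(1)[of x] \<open>a \<le> x\<close> by (simp add: continuous_at_imp_continuous_within)
  qed
qed

lemma has_real_derivative_at_left_endpoint_if_tendsto:
  fixes f f' :: "real \<Rightarrow> real"
  assumes cont: "continuous_on {a..} f"
    and deriv: "\<And>t. a < t \<Longrightarrow> (f has_real_derivative f' t) (at t)"
    and lim: "(f' \<longlongrightarrow> f' a) (at_right a)"
  shows "(f has_real_derivative f' a) (at a within {a..})"
  unfolding has_field_derivative_iff at_within_Ici_at_right
proof (rule tendstoI)
  fix e :: real assume "e > 0"
  from tendstoD[OF lim this] obtain b where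
    b: "a < b" "\<And>y. a < y \<Longrightarrow> y < b \<Longrightarrow> dist (f' y) (f' a) < e"
    unfolding eventually_at_right_field by auto
  have "dist ((f y - f a) / (y - a)) (f' a) < e" if y: "a < y" "y < b" for y
  proof -
    have "continuous_on {a..y} f" by (rule continuous_on_subset[OF cont]) auto
    moreover have "f differentiable (at t)" if "a < t" for t
      using deriv[OF that] real_differentiable_def by blast
    ultimately obtain z where z: "a < z" "z < y" "f y - f a = (y - a) * f' z"
      using MVT[OF y(1)] y(1) DERIV_unique deriv by (metis less_trans)
    then show ?thesis using b(2)[of z] y by simp
  qed
  then show "\<forall>\<^sub>F y in at_right a. dist ((f y - f a) / (y - a)) (f' a) < e"
    unfolding eventually_at_right_field using b(1) by blast
qed

lemma lipschitz_on_closure_if_derivative_bounded: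
  fixes f f' :: "real \<Rightarrow> real"
  assumes "convex U" "continuous_on (closure U) f"
    and "\<And>x. x \<in> U \<Longrightarrow> (f has_real_derivative f' x) (at x)"
    and "\<And>x. x \<in> U \<Longrightarrow> \<bar>f' x\<bar> \<le> B" and "0 \<le> B"
  shows "B-lipschitz_on (closure U) f"
proof (rule lipschitz_on_closure[OF lipschitz_onI])
  fix x y assume xy: "x \<in> U" "y \<in> U"
  have "norm (f x - f y) \<le> B * norm (x - y)"
  proof (rule field_differentiable_bound[OF assms(1) _ _ xy])
    show "(f has_field_derivative f' z) (at z within U)" if "z \<in> U" for z
      using assms(3)[OF that] by (rule has_field_derivative_at_within)
    show "norm (f' z) \<le> B" if "z \<in> U" for z
      using assms(4)[OF that] by simp
  qed
  then show "dist (f x) (f y) \<le> B * dist x y" by (simp add: dist_norm)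
qed fact+

lemma lipschitz_on_cball_if_weighted_bound:
  fixes f :: "real \<Rightarrow> real"
  assumes "\<And>x y. x \<in> S \<Longrightarrow> y \<in> S \<Longrightarrow> \<bar>f x - f y\<bar> \<le> K * (1 + \<bar>x\<bar>) * \<bar>y - x\<bar>" and "K \<ge> 0"
  shows "(K * (2 + \<bar>x\<bar>))-lipschitz_on (cball x 1 \<inter> S) f"
proof (rule lipschitz_onI)
  fix y z assume y: "y \<in> cball x 1 \<inter> S" and z: "z \<in> cball x 1 \<inter> S"
  then have "\<bar>y\<bar> \<le> \<bar>x\<bar> + 1" by (auto simp: dist_real_def)
  then have "K * (1 + \<bar>y\<bar>) * \<bar>z - y\<bar> \<le> K * (2 + \<bar>x\<bar>) * \<bar>z - y\<bar>"
    using assms(2) by (intro mult_right_mono mult_left_mono) auto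
  then show "dist (f y) (f z) \<le> K * (2 + \<bar>x\<bar>) * dist y z"
    using assms(1)[of y z] y z by (simp add: dist_real_def abs_minus_commute)
qed (use assms(2) in simp)

subsection \<open>Representation through the Mills ratio\<close>

lemma D_fun_eq: "x > 0 \<Longrightarrow>
  D_fun l x = 2 * l\<^sup>2 * exp (l\<^sup>2 * (x - 1)) * Phi (l * (1 - 2 * x) / sqrt (2 * x))"
  by (simp add: D_fun_def)

lemma Gamma_fun_eq: "x > 0 \<Longrightarrow> Gamma_fun l x = D_fun l x + 2 * l\<^sup>2 * Phi (- l / sqrt (2 * x))"
  by (simp add: Gamma_fun_def)

lemma A_fun_eq: "x > 0 \<Longrightarrow> A_fun l x = - 2 * x * D_fun l x + Gamma_fun l x"
  by (simp add: A_fun_def)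

lemma A_fun_1: "A_fun l 1 = 0"
  by (simp add: A_fun_def Gamma_fun_def D_fun_def)

lemma D_fun_argument_eq:
  "x > 0 \<Longrightarrow> l * (1 - 2 * x) / sqrt (2 * x) = - (l * sqrt (2 * x) - l / sqrt (2 * x))"
  by (simp add: field_simps)

lemma exp_eq_std_normal_density_ratio:
  assumes "x > 0"
  shows "exp (l\<^sup>2 * (x - 1)) = phi (l / sqrt (2 * x)) / phi (l * sqrt (2 * x) - l / sqrt (2 * x))"
proof -
  define s where "s = sqrt (2 * x)"
  have s: "s > 0" "s\<^sup>2 = 2 * x" using assms by (auto simp: s_def)
  have "phi (l / s) / phi (l * s - l / s) = exp ((l * s - l / s)\<^sup>2 / 2 - (l / s)\<^sup>2 / 2)"
    unfolding std_normal_density_def by (simp add: exp_diff[symmetric])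
  also have "(l * s - l / s)\<^sup>2 / 2 - (l / s)\<^sup>2 / 2 = (l\<^sup>2 * s\<^sup>2 - 2 * l\<^sup>2) / 2"
    using s(1) by (simp add: power2_eq_square field_simps)
  also have "\<dots> = l\<^sup>2 * (x - 1)"
    using s by (simp add: field_simps)
  finally show ?thesis by (simp add: s_def)
qed

lemma exp_mult_std_normal_density_eq:
  "x > 0 \<Longrightarrow> exp (l\<^sup>2 * (x - 1)) * phi (l * (1 - 2 * x) / sqrt (2 * x)) = phi (l / sqrt (2 * x))"
  unfolding exp_eq_std_normal_density_ratio D_fun_argument_eq std_normal_density_minus
  using std_normal_density_pos[of "l * sqrt (2 * x) - l / sqrt (2 * x)"] by simp

lemma D_fun_eq_mills_ratio:
  assumes "x > 0"
  shows "D_fun l x = 2 * l\<^sup>2 * phi (l / sqrt (2 * x)) * mills_ratio (l * sqrt (2 * x) - l / sqrt (2 * x))"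
  unfolding D_fun_eq[OF assms] D_fun_argument_eq[OF assms] exp_eq_std_normal_density_ratio[OF assms]
    mills_ratio_def
  by simp

text \<open>
  Here \<open>A(x) = (1 - 2x) D(x) + 2\<ell>\<^sup>2 \<Phi>(-u)\<close> and \<open>w/u = 2x - 1\<close>.
\<close>

lemma A_fun_eq_mills_ratio:
  assumes "l > 0" "x > 0"
  defines "u \<equiv> l / sqrt (2 * x)" and "w \<equiv> l * sqrt (2 * x) - l / sqrt (2 * x)"
  shows "A_fun l x = 2 * l\<^sup>2 * phi u / u * (u * mills_ratio u - w * mills_ratio w)"
proof -
  have s: "sqrt (2 * x) > 0" "sqrt (2 * x) * sqrt (2 * x) = 2 * x" using assms(2) by auto
  have "A_fun l x = (1 - 2 * x) * D_fun l x + 2 * l\<^sup>2 * Phi (- u)"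
    using assms(2) unfolding A_fun_def Gamma_fun_def u_def by (simp add: algebra_simps)
  also have "\<dots> = 2 * l\<^sup>2 * phi u / u * (u * mills_ratio u - w * mills_ratio w)"
    unfolding D_fun_eq_mills_ratio[OF assms(2)] u_def[symmetric] w_def[symmetric]
    using s assms(1) std_normal_density_pos[of u] std_normal_density_pos[of w]
    by (simp add: u_def w_def mills_ratio_def field_simps power2_eq_square)
  finally show ?thesis .
qed

definition D_deriv :: "real \<Rightarrow> real \<Rightarrow> real" where
  "D_deriv l x = l\<^sup>2 * D_fun l x
     - 2 * l ^ 3 * phi (l / sqrt (2 * x)) * (1 / sqrt (2 * x) + 1 / (2 * x * sqrt (2 * x)))"

definition Gamma_deriv :: "real \<Rightarrow> real \<Rightarrow> real" where
  "Gamma_deriv l x = l\<^sup>2 * D_fun l x - 2 * l ^ 3 * phi (l / sqrt (2 * x)) / sqrt (2 * x)"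

text \<open>At \<open>x = 0\<close> the last term of \<open>A_deriv\<close> vanishes since \<open>sqrt 0 = 0\<close>, which is its limit.\<close>

definition A_deriv :: "real \<Rightarrow> real \<Rightarrow> real" where
  "A_deriv l x = D_fun l x * (l\<^sup>2 * (1 - 2 * x) - 2) + 2 * l ^ 3 * sqrt (2 * x) * phi (l / sqrt (2 * x))"

lemma D_fun_has_real_derivative:
  assumes "x > 0"
  shows "(D_fun l has_real_derivative D_deriv l x) (at x)"
proof -
  define E where "E y = 2 * l\<^sup>2 * exp (l\<^sup>2 * (y - 1)) * Phi (l * (1 - 2 * y) / sqrt (2 * y))" for y
  have "(E has_real_derivative
         2 * l\<^sup>2 * (exp (l\<^sup>2 * (x - 1)) * l\<^sup>2 * Phi (l * (1 - 2 * x) / sqrt (2 * x))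
           + exp (l\<^sup>2 * (x - 1)) * phi (l * (1 - 2 * x) / sqrt (2 * x))
             * (- (l / sqrt (2 * x)) - l / (2 * x * sqrt (2 * x))))) (at x)"
    unfolding E_def[abs_def] using assms by (auto intro!: derivative_eq_intros simp: field_simps)
  moreover have "2 * l\<^sup>2 * (exp (l\<^sup>2 * (x - 1)) * l\<^sup>2 * Phi (l * (1 - 2 * x) / sqrt (2 * x))
           + exp (l\<^sup>2 * (x - 1)) * phi (l * (1 - 2 * x) / sqrt (2 * x))
             * (- (l / sqrt (2 * x)) - l / (2 * x * sqrt (2 * x)))) = D_deriv l x"
    unfolding exp_mult_std_normal_density_eq[OF assms] D_deriv_def D_fun_eq[OF assms]
    using assms by (simp add: field_simps power3_eq_cube power2_eq_square)
  ultimately have "(E has_real_derivative D_deriv l x) (at x)" by simp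
  then show ?thesis
    by (rule has_field_derivative_transform_within_open[of _ _ x "{0<..}"])
       (use assms in \<open>auto simp: E_def D_fun_eq\<close>)
qed

lemma Gamma_fun_has_real_derivative:
  assumes "x > 0"
  shows "(Gamma_fun l has_real_derivative Gamma_deriv l x) (at x)"
proof -
  have "((\<lambda>y. D_fun l y + 2 * l\<^sup>2 * Phi (- l / sqrt (2 * y))) has_real_derivative
         D_deriv l x + 2 * l\<^sup>2 * (phi (- l / sqrt (2 * x)) * (l / (2 * x * sqrt (2 * x))))) (at x)"
    using assms by (auto intro!: derivative_eq_intros D_fun_has_real_derivative simp: field_simps)
  moreover have "D_deriv l x + 2 * l\<^sup>2 * (phi (- l / sqrt (2 * x)) * (l / (2 * x * sqrt (2 * x))))
      = Gamma_deriv l x"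
    unfolding D_deriv_def Gamma_deriv_def
    using assms by (simp add: field_simps power3_eq_cube power2_eq_square)
  ultimately have "((\<lambda>y. D_fun l y + 2 * l\<^sup>2 * Phi (- l / sqrt (2 * y))) has_real_derivative
      Gamma_deriv l x) (at x)" by simp
  then show ?thesis
    by (rule has_field_derivative_transform_within_open[of _ _ x "{0<..}"])
       (use assms in \<open>auto simp: Gamma_fun_eq\<close>)
qed

lemma A_fun_has_real_derivative:
  assumes "x > 0"
  shows "(A_fun l has_real_derivative A_deriv l x) (at x)"
proof -
  have "((\<lambda>y. - 2 * y * D_fun l y + Gamma_fun l y) has_real_derivative
         - 2 * D_fun l x - 2 * x * D_deriv l x + Gamma_deriv l x) (at x)"
    using assms
    by (auto intro!: derivative_eq_intros D_fun_has_real_derivative Gamma_fun_has_real_derivative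
        simp: field_simps)
  moreover have "- 2 * D_fun l x - 2 * x * D_deriv l x + Gamma_deriv l x = A_deriv l x"
    unfolding D_deriv_def Gamma_deriv_def A_deriv_def
    using assms by (simp add: field_simps power3_eq_cube power2_eq_square)
  ultimately have "((\<lambda>y. - 2 * y * D_fun l y + Gamma_fun l y) has_real_derivative A_deriv l x) (at x)"
    by simp
  then show ?thesis
    by (rule has_field_derivative_transform_within_open[of _ _ x "{0<..}"])
       (use assms in \<open>auto simp: A_fun_eq\<close>)
qed

context
  fixes l :: real
  assumes l: "l > 0"
begin

lemma A_fun_pos: "0 \<le> x \<Longrightarrow> x < 1 \<Longrightarrow> A_fun l x > 0"
proof (cases "x = 0")
  case True
  then show ?thesis using l by (simp add: A_fun_def)
next
  case False
  assume "0 \<le> x" "x < 1"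
  with False have x: "x > 0" by simp
  define s where "s = sqrt (2 * x)"
  have s: "s > 0" "s * s = 2 * x" using x by (auto simp: s_def)
  have "l * s - l / s < l / s" using s l \<open>x < 1\<close> by (simp add: field_simps)
  then have "(l * s - l / s) * mills_ratio (l * s - l / s) < l / s * mills_ratio (l / s)"
    by (intro mult_mills_ratio_less) (use l s in auto)
  then show ?thesis
    unfolding A_fun_eq_mills_ratio[OF l x] s_def[symmetric]
    using l s std_normal_density_pos[of "l / s"] by simp
qed

lemma A_fun_neg: "x > 1 \<Longrightarrow> A_fun l x < 0"
proof -
  assume "x > 1"
  then have x: "x > 0" by simp
  define s where "s = sqrt (2 * x)"
  have s: "s > 0" "s * s = 2 * x" using x by (auto simp: s_def)
  have "l / s < l * s - l / s" using s l \<open>x > 1\<close> by (simp add: field_simps)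
  moreover have "0 < l / s" using l s by simp
  ultimately have "l / s * mills_ratio (l / s) < (l * s - l / s) * mills_ratio (l * s - l / s)"
    by (intro mult_mills_ratio_less) linarith+
  then show ?thesis
    unfolding A_fun_eq_mills_ratio[OF l x] s_def[symmetric]
    by (intro mult_pos_neg) (use l s std_normal_density_pos[of "l / s"] in auto)
qed

lemma D_fun_pos: "x \<ge> 0 \<Longrightarrow> D_fun l x > 0"
  using l Phi_pos by (simp add: D_fun_def)

lemma D_fun_le: "x \<ge> 0 \<Longrightarrow> D_fun l x \<le> 6 * l\<^sup>2"
proof (cases "x \<le> 1")
  case True
  assume "x \<ge> 0"
  have "D_fun l x \<le> 2 * l\<^sup>2"
  proof (cases "x = 0")
    case True
    then show ?thesis using l by (simp add: D_fun_def)
  next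
    case False
    have "exp (l\<^sup>2 * (x - 1)) * Phi (l * (1 - 2 * x) / sqrt (2 * x)) \<le> 1 * 1"
      using \<open>x \<le> 1\<close> Phi_less_1 Phi_pos
      by (intro mult_mono) (auto simp: mult_nonneg_nonpos less_imp_le)
    then show ?thesis using False l by (simp add: D_fun_def mult.assoc)
  qed
  then show ?thesis using zero_le_power2[of l] by linarith
next
  case False
  then have x: "x > 0" by simp
  define s where "s = sqrt (2 * x)"
  define w where "w = l * s - l / s"
  have s: "s > 1" "s * s = 2 * x" using False by (auto simp: s_def real_less_rsqrt)
  have w: "w > 0" unfolding w_def using s l False by (simp add: field_simps)
  have "phi (l / s) * mills_ratio w \<le> 3"
  proof (cases "w \<ge> 1")
    case True
    have "Phi (- w) < phi w / w" by (rule Phi_minus_less[OF w])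
    also have "\<dots> \<le> phi w" using True std_normal_density_pos[of w] by (simp add: divide_le_eq)
    finally have "mills_ratio w \<le> 1"
      using std_normal_density_pos[of w] by (simp add: mills_ratio_def)
    then have "phi (l / s) * mills_ratio w \<le> 1 * 1"
      using std_normal_density_le_1 mills_ratio_pos by (intro mult_mono) (auto intro: less_imp_le)
    then show ?thesis by simp
  next
    case False
    have "phi (l / s) * mills_ratio w = phi (l / s) / phi w * Phi (- w)"
      by (simp add: mills_ratio_def)
    also have "\<dots> \<le> 3 * 1"
      using std_normal_density_divide_le[of w "l / s"] False w Phi_less_1[of "- w"] Phi_pos[of "- w"]
      by (intro mult_mono) (auto intro: less_imp_le std_normal_density_pos)
    finally show ?thesis by simp
  qed
  then have "2 * l\<^sup>2 * (phi (l / s) * mills_ratio w) \<le> 2 * l\<^sup>2 * 3"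
    by (intro mult_left_mono) auto
  then show ?thesis
    unfolding D_fun_eq_mills_ratio[OF x] s_def[symmetric] w_def[symmetric] by (simp add: mult.assoc)
qed

lemma Gamma_fun_le: "x \<ge> 0 \<Longrightarrow> Gamma_fun l x \<le> 8 * l\<^sup>2"
proof (cases "x = 0")
  case True
  have "2 * l\<^sup>2 * exp (- l\<^sup>2) \<le> 2 * l\<^sup>2 * 1" by (intro mult_left_mono) auto
  also have "\<dots> \<le> 8 * l\<^sup>2" using zero_le_power2[of l] by linarith
  finally show ?thesis using True by (simp add: Gamma_fun_def)
next
  case False
  assume "x \<ge> 0"
  moreover have "2 * l\<^sup>2 * Phi (- l / sqrt (2 * x)) \<le> 2 * l\<^sup>2 * 1"
    using Phi_less_1 by (intro mult_left_mono) (auto intro: less_imp_le)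
  ultimately show ?thesis using False Gamma_fun_eq[of x] D_fun_le[of x] by simp
qed

lemma Gamma_fun_ge: "x \<ge> 0 \<Longrightarrow> 2 * l\<^sup>2 * exp (- l\<^sup>2) * Phi (- l) \<le> Gamma_fun l x"
proof -
  assume "x \<ge> 0"
  have exp_le: "2 * l\<^sup>2 * exp (- l\<^sup>2) * Phi (- l) \<le> 2 * l\<^sup>2 * exp (- l\<^sup>2)"
    by (rule mult_left_le) (use Phi_less_1[of "- l"] Phi_pos[of "- l"] in \<open>auto intro: less_imp_le\<close>)
  show ?thesis
  proof (cases "x = 0")
    case True
    then show ?thesis using exp_le by (simp add: Gamma_fun_def)
  next
    case False
    with \<open>x \<ge> 0\<close> have x: "x > 0" by simp
    have Phi_term: "0 < 2 * l\<^sup>2 * Phi (- l / sqrt (2 * x))" using l Phi_pos by simp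
    show ?thesis
    proof (cases "x \<le> 1 / 2")
      case True
      then have "0 \<le> l * (1 - 2 * x) / sqrt (2 * x)"
        using l x by (intro divide_nonneg_nonneg mult_nonneg_nonneg) auto
      then have "- l \<le> l * (1 - 2 * x) / sqrt (2 * x)" using l by linarith
      then have "2 * l\<^sup>2 * exp (- l\<^sup>2) * Phi (- l) \<le> D_fun l x"
        unfolding D_fun_eq[OF x] using x Phi_mono Phi_pos
        by (intro mult_mono) (auto simp: algebra_simps intro: less_imp_le)
      then show ?thesis using Gamma_fun_eq[OF x, of l] Phi_term by linarith
    next
      case False
      then have "1 \<le> sqrt (2 * x)" by (simp add: real_le_rsqrt)
      then have "- l \<le> - l / sqrt (2 * x)" using l by (simp add: field_simps)
      then have "2 * l\<^sup>2 * Phi (- l) \<le> 2 * l\<^sup>2 * Phi (- l / sqrt (2 * x))"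
        using Phi_mono by (intro mult_left_mono) auto
      moreover have "2 * l\<^sup>2 * exp (- l\<^sup>2) * Phi (- l) \<le> 2 * l\<^sup>2 * Phi (- l)"
        using l Phi_pos[of "- l"] by (simp add: mult_le_cancel_left1 less_imp_le)
      ultimately show ?thesis using Gamma_fun_eq[OF x, of l] D_fun_pos[of x] x by linarith
    qed
  qed
qed

lemma Gamma_fun_pos: "x \<ge> 0 \<Longrightarrow> Gamma_fun l x > 0"
  using Gamma_fun_ge[of x] l Phi_pos[of "- l"] by (smt (verit) exp_gt_zero mult_pos_pos zero_less_power2)

lemma A_fun_le: "x \<ge> 0 \<Longrightarrow> A_fun l x \<le> 8 * l\<^sup>2"
proof (cases "x = 0")
  case True
  then show ?thesis using Gamma_fun_le[of 0] by (simp add: A_fun_def Gamma_fun_def)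
next
  case False
  assume "x \<ge> 0"
  then have "0 \<le> 2 * x * D_fun l x" using D_fun_pos[of x] by simp
  then show ?thesis
    using False \<open>x \<ge> 0\<close> A_fun_eq[of x] Gamma_fun_le[of x] by simp
qed

lemma A_fun_abs_le: "x \<ge> 0 \<Longrightarrow> \<bar>A_fun l x\<bar> \<le> 12 * l\<^sup>2 * (1 + x)"
proof (cases "x = 0")
  case True
  have "2 * l\<^sup>2 * exp (- l\<^sup>2) \<le> 2 * l\<^sup>2 * 1" by (intro mult_left_mono) auto
  also have "\<dots> \<le> 12 * l\<^sup>2 * (1 + x)" using True zero_le_power2[of l] by simp
  finally show ?thesis using True by (simp add: A_fun_def)
next
  case False
  assume x: "x \<ge> 0"
  have "0 \<le> x * D_fun l x" "x * D_fun l x \<le> x * (6 * l\<^sup>2)"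
    using D_fun_pos[OF x] D_fun_le[OF x] x by (auto intro: mult_left_mono)
  moreover have "A_fun l x = Gamma_fun l x - 2 * (x * D_fun l x)"
    using A_fun_eq[of x] False x by simp
  moreover have "12 * l\<^sup>2 * (1 + x) = 12 * l\<^sup>2 + 2 * (x * (6 * l\<^sup>2))"
    by (simp add: algebra_simps)
  ultimately show ?thesis
    using Gamma_fun_pos[OF x] Gamma_fun_le[OF x] zero_le_power2[of l]
    unfolding abs_le_iff by linarith
qed

text \<open>
  For \<open>x = s\<^sup>2/2\<close> the Mills lower bound \<open>R(w) \<ge> w/(1 + w\<^sup>2) \<ge> 1/(2\<ell>s)\<close> gives
  \<open>D(x) \<ge> \<ell>\<phi>(\<ell>)/s\<close>, so the term \<open>-2x D(x)\<close> decreases linearly in \<open>s\<close>.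
\<close>

lemma A_fun_le_linear:
  assumes s2: "s \<ge> 2" and ls: "l * s \<ge> 2"
  shows "A_fun l (s * s / 2) \<le> 8 * l\<^sup>2 - l * phi l * s"
proof -
  define x where "x = s * s / 2"
  define w where "w = l * s - l / s"
  have s: "s > 0" using s2 by simp
  have x: "x > 0" using s by (simp add: x_def)
  have sqrt_x: "sqrt (2 * x) = s" using s by (simp add: x_def real_sqrt_mult_self)
  have "l / s \<le> l * s / 2"
    using mult_mono[OF s2 s2] l s by (simp add: field_simps)
  then have w1: "1 \<le> w" and wle: "w \<le> l * s" using ls l s by (auto simp: w_def)
  have mills: "1 / (2 * (l * s)) \<le> mills_ratio w"
  proof -
    have "1 / (2 * (l * s)) \<le> 1 / (2 * w)"
      using w1 wle by (intro divide_left_mono) (use l s in \<open>auto intro!: mult_pos_pos\<close>)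
    also have "\<dots> \<le> w / (1 + w\<^sup>2)"
      using mult_mono[OF w1 w1] w1 by (simp add: field_simps power2_eq_square)
    also have "\<dots> \<le> mills_ratio w"
      using Phi_minus_greater[of w] w1 std_normal_density_pos[of w]
      by (simp add: mills_ratio_def field_simps)
    finally show ?thesis .
  qed
  have "l * phi l / s = 2 * l\<^sup>2 * phi l * (1 / (2 * (l * s)))"
    using l s by (simp add: field_simps power2_eq_square)
  also have "\<dots> \<le> 2 * l\<^sup>2 * phi (l / s) * mills_ratio w"
    using std_normal_density_antimono[of "l / s" l] mills l s2 std_normal_density_pos
    by (intro mult_mono) (auto simp: field_simps intro: less_imp_le)
  also have "\<dots> = D_fun l x"
    using D_fun_eq_mills_ratio[OF x] by (simp add: sqrt_x w_def)
  finally have "s * s * (l * phi l / s) \<le> s * s * D_fun l x"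
    by (intro mult_left_mono) auto
  then have "A_fun l x \<le> - (s * s) * (l * phi l / s) + 8 * l\<^sup>2"
    using A_fun_eq[OF x] Gamma_fun_le[of x] x by (simp add: x_def)
  also have "- (s * s) * (l * phi l / s) = - (l * phi l * s)"
    using s by (simp add: field_simps)
  finally show ?thesis by (simp add: x_def)
qed

lemma A_fun_not_bdd_below: "\<not> bdd_below (A_fun l ` {0..})"
proof
  assume "bdd_below (A_fun l ` {0..})"
  then obtain m where m: "\<And>x. x \<ge> 0 \<Longrightarrow> m \<le> A_fun l x" by (auto simp: bdd_below_def)
  define c where "c = l * phi l"
  have c: "c > 0" using l std_normal_density_pos by (simp add: c_def)
  define s where "s = max 2 (2 / l) + \<bar>8 * l\<^sup>2 - m\<bar> / c + 1"
  have "0 \<le> \<bar>8 * l\<^sup>2 - m\<bar> / c" using c by simp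
  then have "s \<ge> 2" "s \<ge> 2 / l" "s \<ge> \<bar>8 * l\<^sup>2 - m\<bar> / c + 1"
    unfolding s_def using max.cobounded1[of 2 "2 / l"] max.cobounded2[of 2 "2 / l"] by linarith+
  then have "l * s \<ge> 2" "c * s \<ge> \<bar>8 * l\<^sup>2 - m\<bar> + c"
    using l c by (auto simp: field_simps)
  then have "A_fun l (s * s / 2) < m"
    using A_fun_le_linear[OF \<open>s \<ge> 2\<close>] c by (simp add: c_def)
  then show False using m[of "s * s / 2"] by simp
qed

lemma std_normal_density_divide_le_inverse: "s > 0 \<Longrightarrow> phi (l / s) / s \<le> 1 / l"
proof -
  assume s: "s > 0"
  have "phi (l / s) / s = (l / s * phi (l / s)) / l" using s l by (simp add: field_simps)
  also have "\<dots> \<le> 1 / l"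
    using mult_std_normal_density_le_1[of "l / s"] s l by (intro divide_right_mono) auto
  finally show ?thesis .
qed

lemma std_normal_density_divide_cube_le: "s > 0 \<Longrightarrow> phi (l / s) / (s * s * s) \<le> 8 / l ^ 3"
proof -
  assume s: "s > 0"
  have "phi (l / s) / (s * s * s) = ((l / s) ^ 3 * phi (l / s)) / l ^ 3"
    using s l by (simp add: field_simps power3_eq_cube)
  also have "\<dots> \<le> 8 / l ^ 3"
    using power3_mult_std_normal_density_le_8[of "l / s"] s l by (intro divide_right_mono) auto
  finally show ?thesis .
qed

lemma D_deriv_abs_le: "x > 0 \<Longrightarrow> \<bar>D_deriv l x\<bar> \<le> 6 * l ^ 4 + 2 * l\<^sup>2 + 16"
proof -
  assume x: "x > 0"
  define s where "s = sqrt (2 * x)"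
  define P where "P = phi (l / s)"
  have s: "s > 0" "2 * x * s = s * s * s" using x by (auto simp: s_def)
  have P: "P > 0" "P / s \<le> 1 / l" "P / (s * s * s) \<le> 8 / l ^ 3"
    unfolding P_def using std_normal_density_pos std_normal_density_divide_le_inverse[OF s(1)]
      std_normal_density_divide_cube_le[OF s(1)] by auto
  have "2 * l ^ 3 * (P / s + P / (s * s * s)) \<le> 2 * l ^ 3 * (1 / l + 8 / l ^ 3)"
    using P l by (intro mult_left_mono) auto
  also have "\<dots> = 2 * l\<^sup>2 + 16" using l by (simp add: field_simps power3_eq_cube power2_eq_square)
  finally have "2 * l ^ 3 * (P / s + P / (s * s * s)) \<le> 2 * l\<^sup>2 + 16" .
  moreover have "0 \<le> 2 * l ^ 3 * (P / s + P / (s * s * s))" using P s l by auto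
  moreover have "0 \<le> l\<^sup>2 * D_fun l x" "l\<^sup>2 * D_fun l x \<le> l\<^sup>2 * (6 * l\<^sup>2)"
    using D_fun_pos[of x] D_fun_le[of x] x by (auto intro: mult_left_mono)
  moreover have "D_deriv l x = l\<^sup>2 * D_fun l x - 2 * l ^ 3 * (P / s + P / (s * s * s))"
    unfolding D_deriv_def s_def[symmetric] P_def[symmetric] s(2) by (simp add: field_simps)
  moreover have "l\<^sup>2 * (6 * l\<^sup>2) = 6 * l ^ 4" by (simp add: power2_eq_square power4_eq_xxxx)
  ultimately show ?thesis by linarith
qed

lemma Gamma_deriv_abs_le: "x > 0 \<Longrightarrow> \<bar>Gamma_deriv l x\<bar> \<le> 6 * l ^ 4 + 2 * l\<^sup>2"
proof -
  assume x: "x > 0"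
  define s where "s = sqrt (2 * x)"
  define P where "P = phi (l / s)"
  have s: "s > 0" using x by (auto simp: s_def)
  have P: "P > 0" "P / s \<le> 1 / l"
    unfolding P_def using std_normal_density_pos std_normal_density_divide_le_inverse[OF s] by auto
  have "2 * l ^ 3 * (P / s) \<le> 2 * l ^ 3 * (1 / l)"
    using P l by (intro mult_left_mono) auto
  also have "\<dots> = 2 * l\<^sup>2" using l by (simp add: field_simps power3_eq_cube power2_eq_square)
  finally have "2 * l ^ 3 * (P / s) \<le> 2 * l\<^sup>2" .
  moreover have "0 \<le> 2 * l ^ 3 * (P / s)" using P s l by auto
  moreover have "0 \<le> l\<^sup>2 * D_fun l x" "l\<^sup>2 * D_fun l x \<le> l\<^sup>2 * (6 * l\<^sup>2)"
    using D_fun_pos[of x] D_fun_le[of x] x by (auto intro: mult_left_mono)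
  moreover have "Gamma_deriv l x = l\<^sup>2 * D_fun l x - 2 * l ^ 3 * (P / s)"
    unfolding Gamma_deriv_def s_def[symmetric] P_def[symmetric] by simp
  moreover have "l\<^sup>2 * (6 * l\<^sup>2) = 6 * l ^ 4" by (simp add: power2_eq_square power4_eq_xxxx)
  ultimately show ?thesis by linarith
qed

lemma A_deriv_abs_le: "x > 0 \<Longrightarrow> \<bar>A_deriv l x\<bar> \<le> (12 * l\<^sup>2 * (l\<^sup>2 + 1) + 2 * l ^ 3) * (1 + x)"
proof -
  assume x: "x > 0"
  have "\<bar>l\<^sup>2 * (1 - 2 * x) - 2\<bar> \<le> (2 * l\<^sup>2 + 2) * (1 + x)"
    using x zero_le_power2[of l] by (simp add: abs_le_iff algebra_simps)
  then have "\<bar>D_fun l x * (l\<^sup>2 * (1 - 2 * x) - 2)\<bar> \<le> (6 * l\<^sup>2) * ((2 * l\<^sup>2 + 2) * (1 + x))"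
    using D_fun_pos[of x] D_fun_le[of x] x unfolding abs_mult by (intro mult_mono) auto
  moreover have "sqrt (2 * x) \<le> 1 + x"
    by (rule real_le_lsqrt) (use x in \<open>auto simp: power2_eq_square algebra_simps\<close>)
  then have "\<bar>2 * l ^ 3 * sqrt (2 * x) * phi (l / sqrt (2 * x))\<bar> \<le> 2 * l ^ 3 * ((1 + x) * 1)"
    unfolding abs_mult mult.assoc
    using l x std_normal_density_pos std_normal_density_le_1
    by (intro mult_left_mono mult_mono) (auto intro: less_imp_le)
  ultimately show ?thesis
    unfolding A_deriv_def by (simp add: algebra_simps)
qed

subsection \<open>Behaviour at the origin\<close>

lemma D_fun_argument_at_right_0: "filterlim (\<lambda>y. l * (1 - 2 * y) / sqrt (2 * y)) at_top (at_right 0)"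
proof -
  have "filterlim (\<lambda>y::real. (1 - 2 * y) / sqrt (2 * y)) at_top (at_right 0)" by real_asymp
  from filterlim_tendsto_pos_mult_at_top[OF tendsto_const l this]
  show ?thesis by (simp add: mult.assoc)
qed

lemma Gamma_fun_argument_at_right_0: "filterlim (\<lambda>y. - l / sqrt (2 * y)) at_bot (at_right 0)"
proof -
  have "filterlim (\<lambda>y::real. 1 / sqrt (2 * y)) at_top (at_right 0)" by real_asymp
  from filterlim_tendsto_pos_mult_at_top[OF tendsto_const l this]
  have "filterlim (\<lambda>y. l / sqrt (2 * y)) at_top (at_right 0)" by simp
  from filterlim_compose[OF filterlim_uminus_at_bot_at_top this] show ?thesis by simp
qed

lemma D_fun_tendsto_0: "(D_fun l \<longlongrightarrow> D_fun l 0) (at_right 0)"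
proof -
  have "((\<lambda>y. 2 * l\<^sup>2 * exp (l\<^sup>2 * (y - 1)) * Phi (l * (1 - 2 * y) / sqrt (2 * y)))
         \<longlongrightarrow> 2 * l\<^sup>2 * exp (l\<^sup>2 * (0 - 1)) * 1) (at_right 0)"
    by (intro tendsto_intros filterlim_compose[OF Phi_at_top D_fun_argument_at_right_0])
  then have "((\<lambda>y. 2 * l\<^sup>2 * exp (l\<^sup>2 * (y - 1)) * Phi (l * (1 - 2 * y) / sqrt (2 * y)))
         \<longlongrightarrow> D_fun l 0) (at_right 0)"
    by (simp add: D_fun_def)
  then show ?thesis
    by (rule Lim_transform_eventually)
       (use eventually_at_right_less in \<open>eventually_elim, simp add: D_fun_def\<close>)
qed

lemma Gamma_fun_tendsto_0: "(Gamma_fun l \<longlongrightarrow> Gamma_fun l 0) (at_right 0)"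
proof -
  have "((\<lambda>y. D_fun l y + 2 * l\<^sup>2 * Phi (- l / sqrt (2 * y))) \<longlongrightarrow> D_fun l 0 + 2 * l\<^sup>2 * 0)
         (at_right 0)"
    by (intro tendsto_intros D_fun_tendsto_0 filterlim_compose[OF Phi_at_bot Gamma_fun_argument_at_right_0])
  then have "((\<lambda>y. D_fun l y + 2 * l\<^sup>2 * Phi (- l / sqrt (2 * y))) \<longlongrightarrow> Gamma_fun l 0) (at_right 0)"
    by (simp add: D_fun_def Gamma_fun_def)
  then show ?thesis
    by (rule Lim_transform_eventually)
       (use eventually_at_right_less in \<open>eventually_elim, simp add: Gamma_fun_def\<close>)
qed

lemma A_fun_tendsto_0: "(A_fun l \<longlongrightarrow> A_fun l 0) (at_right 0)"
proof -
  have "((\<lambda>y. - 2 * y * D_fun l y + Gamma_fun l y) \<longlongrightarrow> - 2 * 0 * D_fun l 0 + Gamma_fun l 0)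
         (at_right 0)"
    by (intro tendsto_intros D_fun_tendsto_0 Gamma_fun_tendsto_0)
  then have "((\<lambda>y. - 2 * y * D_fun l y + Gamma_fun l y) \<longlongrightarrow> A_fun l 0) (at_right 0)"
    by (simp add: A_fun_def Gamma_fun_def)
  then show ?thesis
    by (rule Lim_transform_eventually)
       (use eventually_at_right_less in \<open>eventually_elim, simp add: A_fun_def\<close>)
qed

lemma A_deriv_tendsto_0: "(A_deriv l \<longlongrightarrow> A_deriv l 0) (at_right 0)"
proof -
  have "((\<lambda>y. 2 * l ^ 3 * sqrt (2 * y) * phi (l / sqrt (2 * y))) \<longlongrightarrow> 0) (at_right 0)"
  proof (rule tendsto_sandwich[of "\<lambda>_. 0" _ _ "\<lambda>y. 2 * l ^ 3 * sqrt (2 * y)"])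
    show "\<forall>\<^sub>F y in at_right 0. 0 \<le> 2 * l ^ 3 * sqrt (2 * y) * phi (l / sqrt (2 * y))"
      using eventually_at_right_less
      by eventually_elim (use l std_normal_density_pos in \<open>auto intro!: mult_nonneg_nonneg less_imp_le\<close>)
    show "\<forall>\<^sub>F y in at_right 0. 2 * l ^ 3 * sqrt (2 * y) * phi (l / sqrt (2 * y)) \<le> 2 * l ^ 3 * sqrt (2 * y)"
      using eventually_at_right_less
      by eventually_elim (use l std_normal_density_le_1 in \<open>auto intro!: mult_left_le\<close>)
    have "((\<lambda>y. 2 * l ^ 3 * sqrt (2 * y)) \<longlongrightarrow> 2 * l ^ 3 * sqrt (2 * 0)) (at_right 0)"
      by (intro tendsto_intros)
    then show "((\<lambda>y. 2 * l ^ 3 * sqrt (2 * y)) \<longlongrightarrow> 0) (at_right 0)" by simp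
  qed simp
  then have "(A_deriv l \<longlongrightarrow> D_fun l 0 * (l\<^sup>2 * (1 - 2 * 0) - 2) + 0) (at_right 0)"
    unfolding A_deriv_def[abs_def] by (intro tendsto_intros D_fun_tendsto_0)
  then show ?thesis by (simp add: A_deriv_def)
qed

lemma continuous_on_D_fun: "continuous_on {0..} (D_fun l)"
  by (rule continuous_on_Ici_if_tendsto_at_right[OF _ D_fun_tendsto_0])
     (use D_fun_has_real_derivative DERIV_isCont in blast)

lemma continuous_on_Gamma_fun: "continuous_on {0..} (Gamma_fun l)"
  by (rule continuous_on_Ici_if_tendsto_at_right[OF _ Gamma_fun_tendsto_0])
     (use Gamma_fun_has_real_derivative DERIV_isCont in blast)

lemma continuous_on_A_fun: "continuous_on {0..} (A_fun l)"
  by (rule continuous_on_Ici_if_tendsto_at_right[OF _ A_fun_tendsto_0])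
     (use A_fun_has_real_derivative DERIV_isCont in blast)

lemma continuous_on_A_deriv: "continuous_on {0..} (A_deriv l)"
proof (rule continuous_on_Ici_if_tendsto_at_right[OF _ A_deriv_tendsto_0])
  fix x :: real assume "x > 0"
  then have "isCont (D_fun l) x" using D_fun_has_real_derivative DERIV_isCont by blast
  with \<open>x > 0\<close> show "isCont (A_deriv l) x"
    unfolding A_deriv_def[abs_def] std_normal_density_def by (intro continuous_intros) auto
qed

lemma A_fun_has_real_derivative_within:
  "x \<ge> 0 \<Longrightarrow> (A_fun l has_real_derivative A_deriv l x) (at x within {0..})"
  using has_real_derivative_at_left_endpoint_if_tendsto[OF continuous_on_A_fun
      A_fun_has_real_derivative A_deriv_tendsto_0]
    A_fun_has_real_derivative[of x] has_field_derivative_at_within[of "A_fun l"]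
  by (cases "x = 0") auto

lemma lipschitz_on_D_fun: "(6 * l ^ 4 + 2 * l\<^sup>2 + 16)-lipschitz_on {0..} (D_fun l)"
proof -
  have "(6 * l ^ 4 + 2 * l\<^sup>2 + 16)-lipschitz_on (closure {0<..}) (D_fun l)"
    by (rule lipschitz_on_closure_if_derivative_bounded[where f' = "D_deriv l"])
       (use continuous_on_D_fun D_fun_has_real_derivative D_deriv_abs_le in auto)
  then show ?thesis by simp
qed

lemma lipschitz_on_Gamma_fun: "(6 * l ^ 4 + 2 * l\<^sup>2)-lipschitz_on {0..} (Gamma_fun l)"
proof -
  have "(6 * l ^ 4 + 2 * l\<^sup>2)-lipschitz_on (closure {0<..}) (Gamma_fun l)"
    by (rule lipschitz_on_closure_if_derivative_bounded[where f' = "Gamma_deriv l"])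
       (use continuous_on_Gamma_fun Gamma_fun_has_real_derivative Gamma_deriv_abs_le in auto)
  then show ?thesis by simp
qed

lemma lipschitz_on_sqrt_Gamma_fun:
  defines "c \<equiv> 2 * l\<^sup>2 * exp (- l\<^sup>2) * Phi (- l)"
  shows "((6 * l ^ 4 + 2 * l\<^sup>2) / (2 * sqrt c))-lipschitz_on {0..} (\<lambda>x. sqrt (Gamma_fun l x))"
proof -
  have c: "c > 0" using l Phi_pos unfolding c_def by simp
  have "((6 * l ^ 4 + 2 * l\<^sup>2) / (2 * sqrt c))-lipschitz_on (closure {0<..}) (\<lambda>x. sqrt (Gamma_fun l x))"
  proof (rule lipschitz_on_closure_if_derivative_bounded
      [where f' = "\<lambda>x. inverse (sqrt (Gamma_fun l x)) / 2 * Gamma_deriv l x"])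
    show "continuous_on (closure {0<..}) (\<lambda>x. sqrt (Gamma_fun l x))"
      using continuous_on_Gamma_fun by (simp add: continuous_on_real_sqrt)
    fix t :: real assume "t \<in> {0<..}"
    then have t: "t > 0" by simp
    have G: "sqrt c \<le> sqrt (Gamma_fun l t)" "0 < Gamma_fun l t"
      using Gamma_fun_ge[of t] Gamma_fun_pos[of t] t unfolding c_def by auto
    show "((\<lambda>x. sqrt (Gamma_fun l x)) has_real_derivative
           inverse (sqrt (Gamma_fun l t)) / 2 * Gamma_deriv l t) (at t)"
      by (rule DERIV_chain2[OF DERIV_real_sqrt[OF G(2)] Gamma_fun_has_real_derivative[OF t]])
    have "\<bar>inverse (sqrt (Gamma_fun l t)) / 2 * Gamma_deriv l t\<bar>
        = \<bar>Gamma_deriv l t\<bar> / (2 * sqrt (Gamma_fun l t))"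
      using G by (simp add: abs_mult field_simps)
    also have "\<dots> \<le> (6 * l ^ 4 + 2 * l\<^sup>2) / (2 * sqrt c)"
      using Gamma_deriv_abs_le[OF t] G c by (intro frac_le) auto
    finally show "\<bar>inverse (sqrt (Gamma_fun l t)) / 2 * Gamma_deriv l t\<bar>
        \<le> (6 * l ^ 4 + 2 * l\<^sup>2) / (2 * sqrt c)" .
  qed (use c in auto)
  then show ?thesis by simp
qed

lemma A_fun_diff_le_on_interval:
  assumes "0 \<le> x" "x \<le> q" "0 \<le> y" "y \<le> q"
  shows "\<bar>A_fun l x - A_fun l y\<bar> \<le> (12 * l\<^sup>2 * (l\<^sup>2 + 1) + 2 * l ^ 3) * (1 + q) * \<bar>x - y\<bar>"
proof (cases "q = 0")
  case True
  then show ?thesis using assms by simp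
next
  case False
  then have q: "q > 0" using assms by simp
  let ?K = "12 * l\<^sup>2 * (l\<^sup>2 + 1) + 2 * l ^ 3"
  have K: "0 \<le> ?K" using l by simp
  have "(?K * (1 + q))-lipschitz_on (closure {0<..<q}) (A_fun l)"
  proof (rule lipschitz_on_closure_if_derivative_bounded[where f' = "A_deriv l"])
    show "continuous_on (closure {0<..<q}) (A_fun l)"
      by (rule continuous_on_subset[OF continuous_on_A_fun]) (use q in auto)
    fix t :: real assume t: "t \<in> {0<..<q}"
    then show "(A_fun l has_real_derivative A_deriv l t) (at t)"
      using A_fun_has_real_derivative by simp
    have "\<bar>A_deriv l t\<bar> \<le> ?K * (1 + t)" using A_deriv_abs_le[of t] t by simp
    also have "\<dots> \<le> ?K * (1 + q)" using K t by (intro mult_left_mono) auto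
    finally show "\<bar>A_deriv l t\<bar> \<le> ?K * (1 + q)" .
  qed (use K q in auto)
  from lipschitz_onD[OF this, of x y] show ?thesis
    using q assms by (simp add: dist_real_def)
qed

text \<open>
  Near the diagonal this is the mean value bound on \<open>[0, 2x + 1]\<close>; for \<open>y > 2x + 1\<close> the linear
  growth of \<open>|A|\<close> suffices, since then \<open>2 + x + y \<le> 4(y - x)\<close>.
\<close>

lemma A_fun_weighted_lipschitz:
  obtains K where "K \<ge> 0"
    and "\<And>x y. 0 \<le> x \<Longrightarrow> 0 \<le> y \<Longrightarrow> \<bar>A_fun l x - A_fun l y\<bar> \<le> K * (1 + \<bar>x\<bar>) * \<bar>y - x\<bar>"
proof
  define K\<^sub>A where "K\<^sub>A = 12 * l\<^sup>2 * (l\<^sup>2 + 1) + 2 * l ^ 3"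
  have KA: "K\<^sub>A \<ge> 0" using l by (simp add: K\<^sub>A_def)
  then show "2 * K\<^sub>A + 48 * l\<^sup>2 \<ge> 0" by simp
  fix x y :: real assume x: "0 \<le> x" and y: "0 \<le> y"
  show "\<bar>A_fun l x - A_fun l y\<bar> \<le> (2 * K\<^sub>A + 48 * l\<^sup>2) * (1 + \<bar>x\<bar>) * \<bar>y - x\<bar>"
  proof (cases "y \<le> 2 * x + 1")
    case True
    have "\<bar>A_fun l x - A_fun l y\<bar> \<le> K\<^sub>A * (1 + (2 * x + 1)) * \<bar>x - y\<bar>"
      using A_fun_diff_le_on_interval[of x "2 * x + 1" y] x y True by (simp add: K\<^sub>A_def)
    also have "\<dots> = (2 * K\<^sub>A) * (1 + \<bar>x\<bar>) * \<bar>y - x\<bar>"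
      using x by (simp add: abs_minus_commute algebra_simps)
    also have "\<dots> \<le> (2 * K\<^sub>A + 48 * l\<^sup>2) * (1 + \<bar>x\<bar>) * \<bar>y - x\<bar>"
      by (intro mult_right_mono) auto
    finally show ?thesis .
  next
    case False
    have "\<bar>A_fun l x - A_fun l y\<bar> \<le> 12 * l\<^sup>2 * (1 + x) + 12 * l\<^sup>2 * (1 + y)"
      using A_fun_abs_le[OF x] A_fun_abs_le[OF y] by linarith
    also have "\<dots> = 12 * l\<^sup>2 * (2 + x + y)" by (simp add: algebra_simps)
    also have "\<dots> \<le> 12 * l\<^sup>2 * (4 * (y - x))"
      using False x by (intro mult_left_mono) auto
    also have "\<dots> = 48 * l\<^sup>2 * (y - x)" by simp
    also have "\<dots> \<le> 48 * l\<^sup>2 * ((1 + \<bar>x\<bar>) * \<bar>y - x\<bar>)"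
    proof (intro mult_left_mono)
      have "y - x = 1 * \<bar>y - x\<bar>" using False x by simp
      also have "\<dots> \<le> (1 + \<bar>x\<bar>) * \<bar>y - x\<bar>" by (intro mult_right_mono) auto
      finally show "y - x \<le> (1 + \<bar>x\<bar>) * \<bar>y - x\<bar>" .
    qed simp
    also have "\<dots> \<le> (2 * K\<^sub>A + 48 * l\<^sup>2) * ((1 + \<bar>x\<bar>) * \<bar>y - x\<bar>)"
      using KA by (intro mult_right_mono) auto
    finally show ?thesis by (simp add: mult.assoc)
  qed
qed

lemma bdd_above_A_fun: "bdd_above (A_fun l ` {0..})"
  unfolding bdd_above_def using A_fun_le by auto

lemma A_fun_locally_lipschitz: "x \<ge> 0 \<Longrightarrow> \<exists>e > 0. \<exists>L. L-lipschitz_on (cball x e \<inter> {0..}) (A_fun l)"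
proof -
  obtain K where "K \<ge> 0"
    "\<And>x y. 0 \<le> x \<Longrightarrow> 0 \<le> y \<Longrightarrow> \<bar>A_fun l x - A_fun l y\<bar> \<le> K * (1 + \<bar>x\<bar>) * \<bar>y - x\<bar>"
    using A_fun_weighted_lipschitz by blast
  then have "(K * (2 + \<bar>x\<bar>))-lipschitz_on (cball x 1 \<inter> {0..}) (A_fun l)"
    by (intro lipschitz_on_cball_if_weighted_bound) auto
  then show ?thesis using zero_less_one by blast
qed

lemma bounded_D_fun: "bounded (D_fun l ` {0..})"
proof -
  have "\<bar>D_fun l x\<bar> \<le> 6 * l\<^sup>2" if "x \<in> {0..}" for x
    using D_fun_pos[of x] D_fun_le[of x] that by simp
  then show ?thesis unfolding bounded_iff by (intro exI[of _ "6 * l\<^sup>2"]) auto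
qed

lemma bounded_Gamma_fun: "bounded (Gamma_fun l ` {0..})"
proof -
  have "\<bar>Gamma_fun l x\<bar> \<le> 8 * l\<^sup>2" if "x \<in> {0..}" for x
    using Gamma_fun_pos[of x] Gamma_fun_le[of x] that by simp
  then show ?thesis unfolding bounded_iff by (intro exI[of _ "8 * l\<^sup>2"]) auto
qed

lemma bounded_sqrt_Gamma_fun: "bounded ((\<lambda>x. sqrt (Gamma_fun l x)) ` {0..})"
proof -
  have "\<bar>sqrt (Gamma_fun l x)\<bar> \<le> sqrt (8 * l\<^sup>2)" if "x \<in> {0..}" for x
    using Gamma_fun_pos[of x] Gamma_fun_le[of x] that by simp
  then show ?thesis unfolding bounded_iff by (intro exI[of _ "sqrt (8 * l\<^sup>2)"]) auto
qed

end

theorem lemma4p2: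
  fixes l :: real
  assumes "l > 0"
  shows
    "(\<forall>f \<in> {D_fun l, Gamma_fun l, (\<lambda>x. sqrt (Gamma_fun l x))}.
        (\<forall>x \<ge> 0. f x > 0) \<and> (\<exists>L. L-lipschitz_on {0..} f) \<and> bounded (f ` {0..}))
     \<and> bdd_above (A_fun l ` {0..}) \<and> \<not> bdd_below (A_fun l ` {0..})
     \<and> (\<exists>A'. continuous_on {0..} A' \<and>
          (\<forall>x \<ge> 0. (A_fun l has_real_derivative A' x) (at x within {0..})))
     \<and> (\<forall>x \<ge> 0. \<exists>e > 0. \<exists>L. L-lipschitz_on (cball x e \<inter> {0..}) (A_fun l))
     \<and> (\<exists>K. \<forall>x \<ge> 0. \<forall>y \<ge> 0. \<bar>A_fun l x - A_fun l y\<bar> \<le> K * (1 + \<bar>x\<bar>) * \<bar>y - x\<bar>)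
     \<and> (\<forall>x. 0 \<le> x \<and> x < 1 \<longrightarrow> A_fun l x > 0)
     \<and> (\<forall>x > 1. A_fun l x < 0)
     \<and> A_fun l 1 = 0"
proof -
  note l = assms
  have "\<forall>f \<in> {D_fun l, Gamma_fun l, (\<lambda>x. sqrt (Gamma_fun l x))}.
      (\<forall>x \<ge> 0. f x > 0) \<and> (\<exists>L. L-lipschitz_on {0..} f) \<and> bounded (f ` {0..})"
    using D_fun_pos[OF l] lipschitz_on_D_fun[OF l] bounded_D_fun[OF l]
      Gamma_fun_pos[OF l] lipschitz_on_Gamma_fun[OF l] bounded_Gamma_fun[OF l]
      lipschitz_on_sqrt_Gamma_fun[OF l] bounded_sqrt_Gamma_fun[OF l]
    by auto
  moreover have "\<exists>A'. continuous_on {0..} A' \<and>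
      (\<forall>x \<ge> 0. (A_fun l has_real_derivative A' x) (at x within {0..}))"
    using continuous_on_A_deriv[OF l] A_fun_has_real_derivative_within[OF l] by blast
  moreover have "\<forall>x \<ge> 0. \<exists>e > 0. \<exists>L. L-lipschitz_on (cball x e \<inter> {0..}) (A_fun l)"
    using A_fun_locally_lipschitz[OF l] by blast
  moreover have "\<exists>K. \<forall>x \<ge> 0. \<forall>y \<ge> 0. \<bar>A_fun l x - A_fun l y\<bar> \<le> K * (1 + \<bar>x\<bar>) * \<bar>y - x\<bar>"
    by (rule A_fun_weighted_lipschitz[OF l]) blast
  moreover have "\<forall>x. 0 \<le> x \<and> x < 1 \<longrightarrow> A_fun l x > 0" "\<forall>x > 1. A_fun l x < 0"
    using A_fun_pos[OF l] A_fun_neg[OF l] by auto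
  ultimately show ?thesis
    using bdd_above_A_fun[OF l] A_fun_not_bdd_below[OF l] A_fun_1[of l] by (intro conjI) assumption+
qed

end
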